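(* Let $M$ be a known finite-horizon reward-free MDP, $\Pi\subseteq\Pi_{\mathrm{RNS}}$, $\varepsilon\in[0,1]$ and $h\in[H]$. Consider the procedure: set $T=\varepsilon^{-1}$; for $t=1,\dots,T$ compute $\pi^{(t)}\in\Pi$ with $$\mathbb{E}^{M,\pi^{(t)}}\Big[\frac{P^M_{h-1}(x_h\mid x_{h-1},a_{h-1})}{\sum_{i<t}d^{M,\pi^{(i)}}_h(x_h)+P^M_{h-1}(x_h\mid x_{h-1},a_{h-1})}\Big]\ge\sup_{\pi\in\Pi}\mathbb{E}^{M,\pi}\Big[\frac{P^M_{h-1}(x_h\mid x_{h-1},a_{h-1})}{\sum_{i<t}d^{M,\pi^{(i)}}_h(x_h)+P^M_{h-1}(x_h\mid x_{h-1},a_{h-1})}\Big]-\varepsilon_{\mathrm{opt}},$$ and return $p=\mathrm{Unif}(\pi^{(1)},\dots,\pi^{(T)})$. Whenever $\varepsilon_{\mathrm{opt}}\le C^M_{\mathrm{push};h}\cdot\varepsilon\log(2\varepsilon^{-1})$, the output $p\in\Delta(\Pi)$ satisfies $|\mathrm{supp}(p)|\le\varepsilon^{-1}$ and $$\Psi^M_{\mathrm{push};h,\varepsilon}(p)\le 5C^M_{\mathrm{push};h}\log(2\varepsilon^{-1}).$$ Consequently, if $p'$ is the distribution induced by sampling $\pi\sim p$ and executing $\pi\circ_h\pi_{\mathrm{unif}}$, then $\Psi^M_{h,\varepsilon}(p')\le 5|\mathcal{A}|C^M_{\mathrm{push};h}\log(2\varepsilon^{-1})$.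
   Context: Episodic reward-free MDP $M$ (countable states $\mathcal{X}$, actions $\mathcal{A}$, horizon $H$, transitions $P^M_h$). $\Pi_{\mathrm{RNS}}$: randomized non-stationary policies; $\pi_{\mathrm{unif}}$: uniform policy; $\pi\circ_h\pi'$ follows $\pi$ at layers $<h$ and $\pi'$ at layers $\ge h$. $d^{M,\pi}_h(x)$, $d^{M,\pi}_h(x,a)$: layer-$h$ occupancies; $d^{M,p}_h=\mathbb{E}_{\pi\sim p}d^{M,\pi}_h$. Definitions: $\Psi^M_{h,\varepsilon}(p)=\sup_{\pi\in\Pi}\mathbb{E}^{M,\pi}\big[\frac{d^{M,\pi}_h(x_h,a_h)}{d^{M,p}_h(x_h,a_h)+\varepsilon d^{M,\pi}_h(x_h,a_h)}\big]$; $\Psi^M_{\mathrm{push};h,\varepsilon}(p)=\sup_{\pi\in\Pi}\mathbb{E}^{M,\pi}\big[\frac{P^M_{h-1}(x_h\mid x_{h-1},a_{h-1})}{d^{M,p}_h(x_h)+\varepsilon P^M_{h-1}(x_h\mid x_{h-1},a_{h-1})}\big]$; $C^M_{\mathrm{push};h}=\inf_{\mu\in\Delta(\mathcal{X})}\sup_{(x,a,x')}\frac{P^M_{h-1}(x'\mid x,a)}{\mu(x')}$. *)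

theory Defs
  imports "HOL-Probability.Probability"
begin

text \<open>Layers are 1..H. init is the layer-1 state distribution, trans h x a is the
  distribution of x_{h+1} given (x_h, a_h) = (x, a).\<close>

record ('x, 'a) mdp =
  horizon :: nat
  init :: "'x pmf"
  trans :: "nat \<Rightarrow> 'x \<Rightarrow> 'a \<Rightarrow> 'x pmf"

type_synonym ('x, 'a) policy = "nat \<Rightarrow> 'x \<Rightarrow> 'a pmf"

text \<open>P_{h-1}(x' | x, a), with the standard convention P_0(. | x, a) = d_1 (initial distribution).\<close>
definition Pprev :: "('x, 'a) mdp \<Rightarrow> nat \<Rightarrow> 'x \<Rightarrow> 'a \<Rightarrow> 'x pmf" where
  "Pprev M h x a = (if h \<le> 1 then init M else trans M (h - 1) x a)"

text \<open>Law of the state x_h under policy \<pi> (layer 0 is a dummy copy of init).\<close>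
fun state_dist :: "('x, 'a) mdp \<Rightarrow> ('x, 'a) policy \<Rightarrow> nat \<Rightarrow> 'x pmf" where
  "state_dist M \<pi> 0 = init M"
| "state_dist M \<pi> (Suc 0) = init M"
| "state_dist M \<pi> (Suc (Suc h)) =
     bind_pmf (state_dist M \<pi> (Suc h)) (\<lambda>x. bind_pmf (\<pi> (Suc h) x) (\<lambda>a. trans M (Suc h) x a))"

definition occ :: "('x, 'a) mdp \<Rightarrow> ('x, 'a) policy \<Rightarrow> nat \<Rightarrow> 'x \<Rightarrow> real" where
  "occ M \<pi> h x = pmf (state_dist M \<pi> h) x"

definition sa_dist :: "('x, 'a) mdp \<Rightarrow> ('x, 'a) policy \<Rightarrow> nat \<Rightarrow> ('x \<times> 'a) pmf" where
  "sa_dist M \<pi> h = bind_pmf (state_dist M \<pi> h) (\<lambda>x. map_pmf (\<lambda>a. (x, a)) (\<pi> h x))"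

definition occ_sa :: "('x, 'a) mdp \<Rightarrow> ('x, 'a) policy \<Rightarrow> nat \<Rightarrow> 'x \<times> 'a \<Rightarrow> real" where
  "occ_sa M \<pi> h xa = pmf (sa_dist M \<pi> h) xa"

definition occ_mix :: "('x, 'a) mdp \<Rightarrow> ('x, 'a) policy pmf \<Rightarrow> nat \<Rightarrow> 'x \<Rightarrow> real" where
  "occ_mix M p h x = measure_pmf.expectation p (\<lambda>\<pi>. occ M \<pi> h x)"

definition occ_sa_mix :: "('x, 'a) mdp \<Rightarrow> ('x, 'a) policy pmf \<Rightarrow> nat \<Rightarrow> 'x \<times> 'a \<Rightarrow> real" where
  "occ_sa_mix M p h xa = measure_pmf.expectation p (\<lambda>\<pi>. occ_sa M \<pi> h xa)"

text \<open>For h = 1 the pair (x_0,a_0) is a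
  dummy and the x_h-marginal is init, so expectations of functions of
  (P_0(x_1|x_0,a_0), x_1) do not depend on the dummy.\<close>
definition trip_dist :: "('x, 'a) mdp \<Rightarrow> ('x, 'a) policy \<Rightarrow> nat \<Rightarrow> ('x \<times> 'a \<times> 'x) pmf" where
  "trip_dist M \<pi> h = bind_pmf (state_dist M \<pi> (h - 1)) (\<lambda>x. bind_pmf (\<pi> (h - 1) x)
       (\<lambda>a. map_pmf (\<lambda>x'. (x, a, x')) (Pprev M h x a)))"

definition push_obj :: "('x, 'a) mdp \<Rightarrow> nat \<Rightarrow> ('x \<Rightarrow> real) \<Rightarrow> real \<Rightarrow> ('x, 'a) policy \<Rightarrow> real" where
  "push_obj M h D c \<pi> = measure_pmf.expectation (trip_dist M \<pi> h)
     (\<lambda>(x, a, x'). pmf (Pprev M h x a) x' / (D x' + c * pmf (Pprev M h x a) x'))"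

definition Psi_push :: "('x, 'a) mdp \<Rightarrow> ('x, 'a) policy set \<Rightarrow> nat \<Rightarrow> real \<Rightarrow> ('x, 'a) policy pmf \<Rightarrow> real" where
  "Psi_push M PI h \<epsilon> p = (SUP \<pi>\<in>PI. push_obj M h (occ_mix M p h) \<epsilon> \<pi>)"

definition Psi :: "('x, 'a) mdp \<Rightarrow> ('x, 'a) policy set \<Rightarrow> nat \<Rightarrow> real \<Rightarrow> ('x, 'a) policy pmf \<Rightarrow> real" where
  "Psi M PI h \<epsilon> p = (SUP \<pi>\<in>PI. measure_pmf.expectation (sa_dist M \<pi> h)
       (\<lambda>xa. occ_sa M \<pi> h xa / (occ_sa_mix M p h xa + \<epsilon> * occ_sa M \<pi> h xa)))"

definition C_push :: "('x, 'a) mdp \<Rightarrow> nat \<Rightarrow> ennreal" where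
  "C_push M h = (INF \<mu>::'x pmf. SUP xax\<in>(UNIV :: ('x \<times> 'a \<times> 'x) set).
       (case xax of (x, a, x') \<Rightarrow> ennreal (pmf (Pprev M h x a) x') / ennreal (pmf \<mu> x')))"

definition unif_pol :: "('x, 'a::finite) policy" where
  "unif_pol = (\<lambda>l x. pmf_of_set UNIV)"

definition comp_pol :: "('x, 'a) policy \<Rightarrow> nat \<Rightarrow> ('x, 'a) policy \<Rightarrow> ('x, 'a) policy" where
  "comp_pol \<pi> h \<pi>' = (\<lambda>l. if l < h then \<pi> l else \<pi>' l)"

end

theory Submission
  imports Defs
begin

text \<open>
  Fix \<mu> and C with P_{h-1}(x' | x, a) \<le> C \<mu>(x'), and write D_t = \<Sum>_{i<t} d_h^(i) for the occupancy
  accumulated before round t. Bounding the transition probability by C \<mu>, the objective of the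
  round-t policy is at most \<Sum>_x d_h^(t)(x) C \<mu>(x) / (D_t(x) + C \<mu>(x)); for fixed x these terms
  telescope against ln (D_t(x) + C \<mu>(x)), so their sum over the T rounds is O(C log T).
  Since d_h^p = D_{T+1} / T and \<epsilon> = 1/T, the objective defining \<Psi>_push(p) is T times the round
  objective at D_{T+1}, which is antitone in D; hence it is at most the sum of the greedy values
  plus T \<epsilon>_opt. Taking the infimum over \<mu> gives C_push.
  Composing with the uniform policy gives d_h(x, a) = d_h(x) / |A|, and Jensen's inequality for the
  convex map t \<mapsto> t^2 / (D + \<epsilon> t) bounds the resulting state-level ratio by the push objective,
  at the cost of the factor |A|.
\<close>

lemma frac_le_inverse_coeff:
  fixes D e t :: real
  assumes "0 \<le> D" "0 < e" "0 \<le> t"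
  shows "t / (D + e * t) \<le> 1 / e"
proof (cases "t = 0")
  case False
  then have "t / (D + e * t) \<le> t / (e * t)"
    using assms by (intro divide_left_mono) (auto intro!: mult_pos_pos add_nonneg_pos)
  then show ?thesis
    using False by simp
qed (use assms in simp)

lemma frac_add_mono:
  fixes P A D :: real
  assumes "0 \<le> P" "P \<le> A" "0 \<le> D"
  shows "P / (D + P) \<le> A / (D + A)"
proof (cases "P = 0")
  case False
  then have "0 < D + P" "0 < D + A"
    using assms by auto
  moreover have "P * (D + A) \<le> A * (D + P)"
    using mult_left_mono[OF \<open>P \<le> A\<close> \<open>0 \<le> D\<close>] by (simp add: algebra_simps)
  ultimately show ?thesis
    by (simp add: divide_simps)
qed (use assms in simp)

text \<open>Convexity of \<open>t \<mapsto> t\<^sup>2 / (D + e t)\<close> on \<open>[0, \<infinity>)\<close>: the gap to the tangent at \<open>d\<close>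
  is \<open>D\<^sup>2 (y - d)\<^sup>2 / ((D + e d)\<^sup>2 (D + e y))\<close>.\<close>

lemma square_frac_above_tangent:
  fixes D e y d :: real
  assumes "0 \<le> D" "0 < e" "0 \<le> y" "0 \<le> d"
  shows "d * (d / (D + e * d)) + d * (2 * D + e * d) / (D + e * d)\<^sup>2 * (y - d)
    \<le> y * (y / (D + e * y))"
proof (cases "D = 0")
  case True
  then show ?thesis
    using assms by (cases "d = 0"; cases "y = 0") (simp_all add: power2_eq_square field_simps)
next
  case False
  then have pos: "0 < D + e * d" "0 < D + e * y"
    using assms by (simp_all add: add_pos_nonneg)
  have "y * (y / (D + e * y)) - (d * (d / (D + e * d)) + d * (2 * D + e * d) / (D + e * d)\<^sup>2 * (y - d))
      = D\<^sup>2 * (y - d)\<^sup>2 / ((D + e * d)\<^sup>2 * (D + e * y))"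
    using pos by (simp add: divide_simps power2_eq_square) (simp add: algebra_simps)
  also have "\<dots> \<ge> 0"
    using pos by simp
  finally show ?thesis
    by simp
qed

lemma ln_le_ln_add_tangent:
  fixes y T :: real
  assumes "0 \<le> y" "0 \<le> T"
  shows "ln (1 + y) \<le> ln (1 + T) + y / (1 + T)"
proof (cases "y \<le> T")
  case True
  then show ?thesis
    using assms by (simp add: add_increasing2)
next
  case False
  have "ln ((1 + y) / (1 + T)) \<le> (1 + y) / (1 + T) - 1"
    using assms by (intro ln_le_minus_one) auto
  also have "\<dots> \<le> y / (1 + T)"
    using assms by (simp add: field_simps)
  finally show ?thesis
    using assms by (simp add: ln_div)
qed

lemma mult_frac_le_ln_increment:
  fixes u d a :: real
  assumes "0 < a" "a \<le> u" "0 \<le> d" "d \<le> a"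
  shows "d * (a / u) \<le> 2 * a * (ln (u + d) - ln u)"
proof -
  have u: "0 < u"
    using assms by simp
  have "ln (u / (u + d)) \<le> u / (u + d) - 1"
    using assms by (intro ln_le_minus_one) auto
  then have "d / (u + d) \<le> ln (u + d) - ln u"
    using u assms by (simp add: ln_div field_simps)
  moreover have "d / (2 * u) \<le> d / (u + d)"
    using u assms by (intro divide_left_mono) auto
  ultimately have "2 * a * (d / (2 * u)) \<le> 2 * a * (ln (u + d) - ln u)"
    using assms by (intro mult_left_mono) auto
  then show ?thesis
    using u by (simp add: field_simps)
qed

lemma sum_frac_le_ln_telescope:
  fixes d :: "nat \<Rightarrow> real" and a :: real
  assumes "0 < a" and "\<And>t. 0 \<le> d t" "\<And>t. d t \<le> a"
  shows "(\<Sum>t\<in>{1..<n}. d t * (a / ((\<Sum>i\<in>{1..<t}. d i) + a)))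
     \<le> 2 * a * (ln ((\<Sum>i\<in>{1..<n}. d i) + a) - ln a)"
proof (induction n)
  case (Suc n)
  show ?case
  proof (cases "1 \<le> n")
    case True
    define S where "S = (\<Sum>i\<in>{1..<n}. d i)"
    have "0 \<le> S"
      unfolding S_def using assms by (simp add: sum_nonneg)
    then have "d n * (a / (S + a)) \<le> 2 * a * (ln (S + a + d n) - ln (S + a))"
      using assms by (intro mult_frac_le_ln_increment) auto
    with Suc.IH True show ?thesis
      by (simp add: S_def atLeastLessThanSuc algebra_simps)
  qed simp
qed simp

lemma sum_frac_le_ln:
  fixes d :: "nat \<Rightarrow> real" and a :: real and T :: nat
  assumes a: "0 \<le> a" and d: "\<And>t. 0 \<le> d t" "\<And>t. d t \<le> a"
  shows "(\<Sum>t\<in>{1..T}. d t * (a / ((\<Sum>i\<in>{1..<t}. d i) + a)))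
     \<le> 2 * a * ln (1 + real T) + 2 * (\<Sum>i\<in>{1..T}. d i) / (1 + real T)"
proof (cases "a = 0")
  case True
  then show ?thesis
    using d by (simp add: sum_nonneg)
next
  case False
  then have a0: "0 < a"
    using a by simp
  define S where "S = (\<Sum>i\<in>{1..T}. d i)"
  have S0: "0 \<le> S"
    unfolding S_def using d by (simp add: sum_nonneg)
  have "(\<Sum>t\<in>{1..T}. d t * (a / ((\<Sum>i\<in>{1..<t}. d i) + a))) \<le> 2 * a * (ln (S + a) - ln a)"
    using sum_frac_le_ln_telescope[of a d "Suc T", OF a0 d]
    by (simp add: S_def atLeastLessThanSuc_atLeastAtMost)
  also have "ln (S + a) - ln a = ln (1 + S / a)"
  proof -
    have "1 + S / a = (S + a) / a"
      using a0 by (simp add: field_simps)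
    then show ?thesis
      using a0 S0 by (simp add: ln_div)
  qed
  also have "2 * a * ln (1 + S / a) \<le> 2 * a * (ln (1 + real T) + (S / a) / (1 + real T))"
    using a0 S0 by (intro mult_left_mono ln_le_ln_add_tangent) auto
  also have "\<dots> = 2 * a * ln (1 + real T) + 2 * S / (1 + real T)"
  proof -
    have "2 * a * ((S / a) / (1 + real T)) = 2 * S / (1 + real T)"
      using a0 by simp
    then show ?thesis
      by (simp add: distrib_left)
  qed
  finally show ?thesis
    unfolding S_def .
qed

lemma frac_scaled_le:
  fixes d b D e n :: real
  assumes "0 \<le> d" "d \<le> b" "0 \<le> D" "0 < e" "1 \<le> n"
  shows "d / (D / n + e * d) \<le> n * (b / (D + e * b))"
proof (cases "d = 0")
  case False
  then have d: "0 < d"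
    using assms by simp
  have "d / (D / n + e * d) = n * (d / (D + n * e * d))"
    using assms d by (simp add: field_simps)
  also have "\<dots> \<le> n * (d / (D + e * d))"
    using assms d by (intro mult_left_mono divide_left_mono add_left_mono mult_right_mono)
      (auto intro!: mult_pos_pos add_nonneg_pos)
  also have "d / (D + e * d) \<le> b / (D + e * b)"
  proof -
    have "0 < D + e * d" "0 < D + e * b"
      using assms d by (auto intro!: add_nonneg_pos)
    moreover have "d * (D + e * b) \<le> b * (D + e * d)"
      using mult_left_mono[OF \<open>d \<le> b\<close> \<open>0 \<le> D\<close>] by (simp add: algebra_simps)
    ultimately show ?thesis
      by (simp add: divide_simps)
  qed
  then have "n * (d / (D + e * d)) \<le> n * (b / (D + e * b))"
    using assms by (intro mult_left_mono) auto
  finally show ?thesis .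
qed (use assms in simp)

lemma expectation_eq_nn_integral_bounded:
  fixes f :: "'b \<Rightarrow> real"
  assumes "\<And>x. 0 \<le> f x" "\<And>x. f x \<le> B"
  shows "ennreal (measure_pmf.expectation p f) = (\<integral>\<^sup>+x. ennreal (f x) \<partial>p)"
proof -
  have "integrable (measure_pmf p) f"
    by (rule measure_pmf.integrable_const_bound[where B = B]) (use assms in auto)
  then show ?thesis
    using assms by (simp add: nn_integral_eq_integral)
qed

lemma nn_integral_count_space_cmult_pmf:
  assumes "0 \<le> c"
  shows "(\<integral>\<^sup>+x. ennreal (c * pmf p x) \<partial>count_space UNIV) = ennreal c"
proof -
  have "(\<integral>\<^sup>+x. ennreal (c * pmf p x) \<partial>count_space UNIV)
      = ennreal c * (\<integral>\<^sup>+x. ennreal (pmf p x) \<partial>count_space UNIV)"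
    using assms by (simp add: ennreal_mult nn_integral_cmult)
  also have "(\<integral>\<^sup>+x. ennreal (pmf p x) \<partial>count_space UNIV) = 1"
    using nn_integral_pmf[where p = p and A = UNIV] by simp
  finally show ?thesis
    by simp
qed

lemma pmf_dominated_const_ge_1:
  assumes "0 \<le> C" "\<And>x. pmf p x \<le> C * pmf q x"
  shows "1 \<le> C"
proof -
  have "ennreal 1 = (\<integral>\<^sup>+x. ennreal (1 * pmf p x) \<partial>count_space UNIV)"
    by (rule nn_integral_count_space_cmult_pmf[symmetric]) simp
  also have "\<dots> \<le> (\<integral>\<^sup>+x. ennreal (C * pmf q x) \<partial>count_space UNIV)"
    using assms by (intro nn_integral_mono ennreal_leI) simp
  also have "\<dots> = ennreal C"
    using assms(1) by (rule nn_integral_count_space_cmult_pmf)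
  finally show ?thesis
    using assms by simp
qed

lemma nn_integral_count_space_pmf_combination:
  assumes "0 \<le> a" "0 \<le> c"
  shows "(\<integral>\<^sup>+x. ennreal (a * pmf p x + (\<Sum>i\<in>I. c * pmf (q i) x)) \<partial>count_space UNIV)
    = ennreal (a + real (card I) * c)"
proof -
  have "(\<integral>\<^sup>+x. ennreal (a * pmf p x + (\<Sum>i\<in>I. c * pmf (q i) x)) \<partial>count_space UNIV)
      = (\<integral>\<^sup>+x. ennreal (a * pmf p x) + (\<Sum>i\<in>I. ennreal (c * pmf (q i) x)) \<partial>count_space UNIV)"
    using assms by (intro nn_integral_cong) (simp add: sum_nonneg)
  also have "\<dots> = ennreal a + (\<Sum>i\<in>I. ennreal c)"
    using assms by (subst nn_integral_add)
      (simp_all only: nn_integral_sum nn_integral_count_space_cmult_pmf borel_measurable_count_space)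
  also have "\<dots> = ennreal (a + real (card I) * c)"
    using assms by (simp add: ennreal_of_nat_eq_real_of_nat ennreal_mult)
  finally show ?thesis .
qed

text \<open>Jensen's inequality for \<open>t \<mapsto> t\<^sup>2 / (D + e t)\<close>, via the tangent line at the mean.\<close>

lemma square_frac_expectation_le:
  fixes Q :: "'b pmf" and f :: "'b \<Rightarrow> real"
  assumes D: "0 \<le> D" and e: "0 < e" and f: "\<And>y. 0 \<le> f y" "\<And>y. f y \<le> 1"
  defines "m \<equiv> measure_pmf.expectation Q f"
  shows "ennreal (m * (m / (D + e * m))) \<le> (\<integral>\<^sup>+y. ennreal (f y * (f y / (D + e * f y))) \<partial>Q)"
proof -
  define g where "g t = t * (t / (D + e * t))" for t
  define c where "c = m * (2 * D + e * m) / (D + e * m)\<^sup>2"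
  have g_bounds: "0 \<le> g (f y)" "g (f y) \<le> 1 / e" for y
  proof -
    have "f y / (D + e * f y) \<le> 1 / e"
      using D e f by (intro frac_le_inverse_coeff) auto
    then have "g (f y) \<le> 1 * (1 / e)"
      unfolding g_def using D e f by (intro mult_mono) auto
    then show "g (f y) \<le> 1 / e"
      by simp
    show "0 \<le> g (f y)"
      unfolding g_def using D e f(1)[of y] by simp
  qed
  have int_f: "integrable Q f"
    by (rule measure_pmf.integrable_const_bound[where B = 1]) (use f in auto)
  have int_g: "integrable Q (\<lambda>y. g (f y))"
    by (rule measure_pmf.integrable_const_bound[where B = "1 / e"]) (use g_bounds in auto)
  have "m \<ge> 0"
    unfolding m_def using f by simp
  have "g m = (\<integral>y. g m + c * (f y - m) \<partial>Q)"
    using int_f by (simp add: m_def)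
  also have "\<dots> \<le> (\<integral>y. g (f y) \<partial>Q)"
    using int_f int_g \<open>m \<ge> 0\<close> f unfolding g_def c_def
    by (intro integral_mono square_frac_above_tangent D e) auto
  finally have "ennreal (g m) \<le> ennreal (\<integral>y. g (f y) \<partial>Q)"
    by (rule ennreal_leI)
  also have "\<dots> = (\<integral>\<^sup>+y. ennreal (g (f y)) \<partial>Q)"
    using g_bounds by (rule expectation_eq_nn_integral_bounded)
  finally show ?thesis
    unfolding g_def .
qed

lemma nn_integral_square_frac_bind_le:
  fixes Q :: "'b pmf" and K :: "'b \<Rightarrow> 'x::countable pmf" and D :: "'x \<Rightarrow> real"
  assumes D: "\<And>x. 0 \<le> D x" and e: "0 < e"
  shows "(\<integral>\<^sup>+x. ennreal (pmf (Q \<bind> K) x * (pmf (Q \<bind> K) x / (D x + e * pmf (Q \<bind> K) x)))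
      \<partial>count_space UNIV)
    \<le> (\<integral>\<^sup>+y. \<integral>\<^sup>+x. ennreal (pmf (K y) x * (pmf (K y) x / (D x + e * pmf (K y) x)))
      \<partial>count_space UNIV \<partial>Q)"
proof -
  have "(\<integral>\<^sup>+x. ennreal (pmf (Q \<bind> K) x * (pmf (Q \<bind> K) x / (D x + e * pmf (Q \<bind> K) x)))
      \<partial>count_space UNIV)
    \<le> (\<integral>\<^sup>+x. \<integral>\<^sup>+y. ennreal (pmf (K y) x * (pmf (K y) x / (D x + e * pmf (K y) x)))
      \<partial>Q \<partial>count_space UNIV)"
    unfolding pmf_bind using D e
    by (intro nn_integral_mono square_frac_expectation_le) (auto simp: pmf_le_1)
  also have "\<dots> = (\<integral>\<^sup>+y. \<integral>\<^sup>+x. ennreal (pmf (K y) x * (pmf (K y) x / (D x + e * pmf (K y) x)))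
      \<partial>count_space UNIV \<partial>Q)"
    by (rule nn_integral_count_space_nn_integral[symmetric]) auto
  finally show ?thesis .
qed

lemma ennreal_le_INF_mult:
  fixes X c :: ennreal
  assumes "\<And>i. X \<le> f i * c" "c \<noteq> 0" "c \<noteq> \<top>"
  shows "X \<le> (INF i. f i) * c"
proof -
  have "X / c \<le> (INF i. f i)"
  proof (rule INF_greatest)
    fix i
    have "X / c \<le> f i * c / c"
      using assms(1) by (rule divide_right_mono_ennreal)
    then show "X / c \<le> f i"
      using assms by (simp add: mult_divide_eq_ennreal)
  qed
  then have "X / c * c \<le> (INF i. f i) * c"
    by (rule mult_right_mono) simp
  then show ?thesis
    using assms by (simp add: ennreal_divide_times less_top)
qed

section \<open>The push objective\<close>

lemma state_dist_eq_bind_sa_dist: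
  assumes "1 \<le> h"
  shows "state_dist M \<pi> h = sa_dist M \<pi> (h - 1) \<bind> case_prod (Pprev M h)"
proof (cases h)
  case (Suc k)
  then show ?thesis
    by (cases k) (simp_all add: sa_dist_def Pprev_def bind_assoc_pmf bind_map_pmf)
qed (use assms in simp)

lemma trip_dist_eq_bind_sa_dist:
  "trip_dist M \<pi> h = sa_dist M \<pi> (h - 1) \<bind> (\<lambda>(x, a). map_pmf (Pair x \<circ> Pair a) (Pprev M h x a))"
  unfolding trip_dist_def sa_dist_def by (simp add: bind_assoc_pmf bind_map_pmf comp_def)

lemma map_trip_dist_last:
  assumes "1 \<le> h"
  shows "map_pmf (\<lambda>(x, a, x'). x') (trip_dist M \<pi> h) = state_dist M \<pi> h"
  unfolding trip_dist_eq_bind_sa_dist state_dist_eq_bind_sa_dist[OF assms]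
  by (simp add: map_bind_pmf map_pmf_comp case_prod_unfold)

lemma integrable_push_obj:
  assumes "\<And>x. 0 \<le> D x" "0 < e"
  shows "integrable (trip_dist M \<pi> h)
    (\<lambda>(x, a, x'). pmf (Pprev M h x a) x' / (D x' + e * pmf (Pprev M h x a) x'))"
  by (rule measure_pmf.integrable_const_bound[where B = "1 / e"])
    (use assms in \<open>auto intro!: frac_le_inverse_coeff split: prod.splits\<close>)

lemma push_obj_bounds:
  assumes "\<And>x. 0 \<le> D x" "0 < e"
  shows "0 \<le> push_obj M h D e \<pi>" "push_obj M h D e \<pi> \<le> 1 / e"
  unfolding push_obj_def using assms
  by (auto intro!: integral_nonneg_AE measure_pmf.integral_le_const integrable_push_obj
      frac_le_inverse_coeff)

lemma push_obj_antimono: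
  assumes D: "\<And>x. 0 \<le> D x" and le: "\<And>x. D x \<le> D' x" and e: "0 < e"
  shows "push_obj M h D' e \<pi> \<le> push_obj M h D e \<pi>"
proof -
  have D': "0 \<le> D' x" for x
    using D le order_trans by blast
  have "P / (D' x' + e * P) \<le> P / (D x' + e * P)" if "0 \<le> P" for P x'
    using that D[of x'] le[of x'] e
    by (cases "P = 0") (auto intro!: divide_left_mono add_nonneg_pos mult_pos_pos)
  then show ?thesis
    unfolding push_obj_def using D D' e
    by (intro integral_mono integrable_push_obj) (auto split: prod.splits)
qed

lemma push_obj_rescale:
  assumes "0 < c"
  shows "push_obj M h (\<lambda>x. D x / c) (e / c) \<pi> = c * push_obj M h D e \<pi>"
proof -
  have "P / (D x' / c + e / c * P) = c * (P / (D x' + e * P))" for P x'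
    using assms by (simp add: add_divide_distrib[symmetric])
  then have "(\<lambda>(x, a, x'). pmf (Pprev M h x a) x' / (D x' / c + e / c * pmf (Pprev M h x a) x'))
    = (\<lambda>z. c * (\<lambda>(x, a, x'). pmf (Pprev M h x a) x' / (D x' + e * pmf (Pprev M h x a) x')) z)"
    by (simp add: fun_eq_iff)
  then show ?thesis
    unfolding push_obj_def by (simp only: integral_mult_right_zero)
qed

lemma push_obj_eq_nn_integral:
  assumes D: "\<And>x. 0 \<le> D x" and e: "0 < e"
  shows "ennreal (push_obj M h D e \<pi>) = (\<integral>\<^sup>+y. \<integral>\<^sup>+x'.
      ennreal (pmf (case_prod (Pprev M h) y) x' *
        (pmf (case_prod (Pprev M h) y) x' / (D x' + e * pmf (case_prod (Pprev M h) y) x')))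
      \<partial>count_space UNIV \<partial>sa_dist M \<pi> (h - 1))"
proof -
  have "ennreal (push_obj M h D e \<pi>) = (\<integral>\<^sup>+z. ennreal
      ((\<lambda>(x, a, x'). pmf (Pprev M h x a) x' / (D x' + e * pmf (Pprev M h x a) x')) z)
      \<partial>trip_dist M \<pi> h)"
    unfolding push_obj_def using D e
    by (intro expectation_eq_nn_integral_bounded[where B = "1 / e"])
      (auto intro!: frac_le_inverse_coeff)
  also have "\<dots> = (\<integral>\<^sup>+y. \<integral>\<^sup>+x'.
      ennreal (pmf (case_prod (Pprev M h) y) x' / (D x' + e * pmf (case_prod (Pprev M h) y) x'))
      \<partial>case_prod (Pprev M h) y \<partial>sa_dist M \<pi> (h - 1))"
    unfolding trip_dist_eq_bind_sa_dist by (simp add: split_beta)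
  also have "\<dots> = (\<integral>\<^sup>+y. \<integral>\<^sup>+x'.
      ennreal (pmf (case_prod (Pprev M h) y) x' *
        (pmf (case_prod (Pprev M h) y) x' / (D x' + e * pmf (case_prod (Pprev M h) y) x')))
      \<partial>count_space UNIV \<partial>sa_dist M \<pi> (h - 1))"
    by (intro nn_integral_cong)
      (simp add: nn_integral_measure_pmf ennreal_mult'[symmetric] del: times_divide_eq_right)
  finally show ?thesis .
qed

lemma expectation_occ_frac_le_push_obj:
  fixes M :: "('x::countable, 'a) mdp"
  assumes h: "1 \<le> h" and D: "\<And>x. 0 \<le> D x" and e: "0 < e"
  shows "measure_pmf.expectation (state_dist M \<pi> h) (\<lambda>x. occ M \<pi> h x / (D x + e * occ M \<pi> h x))
    \<le> push_obj M h D e \<pi>"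
proof -
  let ?d = "state_dist M \<pi> h"
  have "ennreal (measure_pmf.expectation ?d (\<lambda>x. occ M \<pi> h x / (D x + e * occ M \<pi> h x)))
      = (\<integral>\<^sup>+x. ennreal (pmf ?d x / (D x + e * pmf ?d x)) \<partial>?d)"
    unfolding occ_def using D e
    by (intro expectation_eq_nn_integral_bounded[where B = "1 / e"]) (auto intro: frac_le_inverse_coeff)
  also have "\<dots> = (\<integral>\<^sup>+x. ennreal (pmf ?d x * (pmf ?d x / (D x + e * pmf ?d x))) \<partial>count_space UNIV)"
    by (simp add: nn_integral_measure_pmf ennreal_mult'[symmetric] del: times_divide_eq_right)
  also have "\<dots> \<le> ennreal (push_obj M h D e \<pi>)"
    unfolding push_obj_eq_nn_integral[OF D e] state_dist_eq_bind_sa_dist[OF h]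
    by (rule nn_integral_square_frac_bind_le[OF D e])
  finally show ?thesis
    by (rule ennreal_le_iff[THEN iffD1, rotated]) (rule push_obj_bounds(1)[where D = D, OF D e])
qed

lemma occ_le_of_Pprev_le:
  assumes "1 \<le> h" and "\<And>x a. pmf (Pprev M h x a) x' \<le> A"
  shows "occ M \<pi> h x' \<le> A"
proof -
  have "occ M \<pi> h x' = (\<integral>y. pmf (case_prod (Pprev M h) y) x' \<partial>sa_dist M \<pi> (h - 1))"
    unfolding occ_def state_dist_eq_bind_sa_dist[OF assms(1)] by (rule pmf_bind)
  also have "\<dots> \<le> A"
    using assms(2)
    by (intro measure_pmf.integral_le_const measure_pmf.integrable_const_bound[where B = 1])
      (auto simp: pmf_le_1 split: prod.splits)
  finally show ?thesis .
qed

lemma push_obj_le_nn_integral_occ: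
  assumes h: "1 \<le> h" and D: "\<And>x. 0 \<le> D x" and A: "\<And>x a x'. pmf (Pprev M h x a) x' \<le> A x'"
  shows "ennreal (push_obj M h D 1 \<pi>)
    \<le> (\<integral>\<^sup>+x'. ennreal (occ M \<pi> h x' * (A x' / (D x' + A x'))) \<partial>count_space UNIV)"
proof -
  have "ennreal (push_obj M h D 1 \<pi>) = (\<integral>\<^sup>+z. ennreal
      ((\<lambda>(x, a, x'). pmf (Pprev M h x a) x' / (D x' + 1 * pmf (Pprev M h x a) x')) z)
      \<partial>trip_dist M \<pi> h)"
    unfolding push_obj_def using D frac_le_inverse_coeff[of "D x'" 1 for x']
    by (intro expectation_eq_nn_integral_bounded[where B = 1]) (auto split: prod.splits)
  also have "\<dots> \<le> (\<integral>\<^sup>+z. ennreal ((\<lambda>(x, a, x'). A x' / (D x' + A x')) z) \<partial>trip_dist M \<pi> h)"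
    using A D by (intro nn_integral_mono ennreal_leI) (auto intro!: frac_add_mono)
  also have "\<dots> = (\<integral>\<^sup>+x'. ennreal (A x' / (D x' + A x')) \<partial>state_dist M \<pi> h)"
    unfolding map_trip_dist_last[OF h, symmetric] by (simp add: split_beta)
  also have "\<dots> = (\<integral>\<^sup>+x'. ennreal (occ M \<pi> h x' * (A x' / (D x' + A x'))) \<partial>count_space UNIV)"
    by (simp add: nn_integral_measure_pmf occ_def ennreal_mult'[symmetric] del: times_divide_eq_right)
  finally show ?thesis .
qed

lemma sum_push_obj_le:
  fixes M :: "('x::countable, 'a) mdp" and pol :: "nat \<Rightarrow> ('x, 'a) policy"
  assumes h: "1 \<le> h" and C: "0 \<le> C" and dom: "\<And>x a x'. pmf (Pprev M h x a) x' \<le> C * pmf \<mu> x'"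
  shows "(\<Sum>t\<in>{1..T}. push_obj M h (\<lambda>x. \<Sum>i\<in>{1..<t}. occ M (pol i) h x) 1 (pol t))
    \<le> 2 * C * ln (1 + real T) + 2 * real T / (1 + real T)"
proof -
  define D where "D t x = (\<Sum>i\<in>{1..<t}. occ M (pol i) h x)" for t x
  define f where "f t x = occ M (pol t) h x * (C * pmf \<mu> x / (D t x + C * pmf \<mu> x))" for t x
  define L where "L = ln (1 + real T)"
  define c where "c = 2 / (1 + real T)"
  have L0: "0 \<le> L" and c0: "0 \<le> c"
    by (simp_all add: L_def c_def)
  have occ0: "0 \<le> occ M \<pi> h x" for \<pi> x
    by (simp add: occ_def)
  have D0: "0 \<le> D t x" for t x
    unfolding D_def by (simp add: occ0 sum_nonneg)
  have f0: "0 \<le> f t x" for t x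
    unfolding f_def using C D0[of t x] occ0 by simp
  have pointwise: "(\<Sum>t\<in>{1..T}. f t x)
      \<le> 2 * C * L * pmf \<mu> x + (\<Sum>i\<in>{1..T}. c * pmf (state_dist M (pol i) h) x)" for x
  proof -
    have "(\<Sum>t\<in>{1..T}. f t x)
        \<le> 2 * (C * pmf \<mu> x) * L + 2 * (\<Sum>i\<in>{1..T}. occ M (pol i) h x) / (1 + real T)"
      unfolding f_def D_def L_def using C occ0 occ_le_of_Pprev_le[OF h dom]
      by (intro sum_frac_le_ln) auto
    then show ?thesis
      by (simp add: c_def occ_def sum_distrib_left sum_divide_distrib mult_ac)
  qed
  have "ennreal (\<Sum>t\<in>{1..T}. push_obj M h (D t) 1 (pol t))
      = (\<Sum>t\<in>{1..T}. ennreal (push_obj M h (D t) 1 (pol t)))"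
    using D0 by (intro sum_ennreal[symmetric] push_obj_bounds(1)) auto
  also have "\<dots> \<le> (\<Sum>t\<in>{1..T}. \<integral>\<^sup>+x. ennreal (f t x) \<partial>count_space UNIV)"
    unfolding f_def using C by (intro sum_mono push_obj_le_nn_integral_occ[OF h D0] dom)
  also have "\<dots> = (\<integral>\<^sup>+x. ennreal (\<Sum>t\<in>{1..T}. f t x) \<partial>count_space UNIV)"
    using f0 by (simp add: nn_integral_sum[symmetric])
  also have "\<dots> \<le> (\<integral>\<^sup>+x. ennreal (2 * C * L * pmf \<mu> x
      + (\<Sum>i\<in>{1..T}. c * pmf (state_dist M (pol i) h) x)) \<partial>count_space UNIV)"
    using pointwise by (intro nn_integral_mono ennreal_leI)
  also have "\<dots> = ennreal (2 * C * L + real T * c)"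
    using C L0 c0 by (subst nn_integral_count_space_pmf_combination) simp_all
  also have "\<dots> = ennreal (2 * C * ln (1 + real T) + 2 * real T / (1 + real T))"
    by (simp add: L_def c_def mult_ac)
  finally show ?thesis
    unfolding D_def by (rule ennreal_le_iff[THEN iffD1, rotated]) (use C in simp)
qed

section \<open>Composition with the uniform policy\<close>

lemma state_dist_cong:
  "(\<And>l. l < h \<Longrightarrow> \<pi> l = \<pi>' l) \<Longrightarrow> state_dist M \<pi> h = state_dist M \<pi>' h"
  by (induction M \<pi> h rule: state_dist.induct) auto

lemma occ_comp_pol: "occ M (comp_pol \<pi> h \<sigma>) h = occ M \<pi> h"
  unfolding occ_def by (subst state_dist_cong[where \<pi>' = \<pi>]) (auto simp: comp_pol_def)

lemma pmf_sa_dist: "pmf (sa_dist M \<pi> h) (x, a) = occ M \<pi> h x * pmf (\<pi> h x) a"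
proof -
  have "pmf (map_pmf (Pair x) (\<pi> h x)) (Pair x a) = pmf (\<pi> h x) a"
    by (rule pmf_map_inj') (auto simp: inj_on_def)
  then have "pmf (map_pmf (Pair y) (\<pi> h y)) (x, a) = indicator {x} y * pmf (\<pi> h x) a" for y
    by (cases "y = x") (auto simp: pmf_eq_0_set_pmf)
  then show ?thesis
    unfolding sa_dist_def pmf_bind occ_def by (simp add: measure_pmf_single)
qed

lemma map_fst_sa_dist: "map_pmf fst (sa_dist M \<pi> h) = state_dist M \<pi> h"
  unfolding sa_dist_def by (simp add: map_bind_pmf map_pmf_comp bind_return_pmf')

lemma occ_sa_le_occ: "occ_sa M \<pi> h xa \<le> occ M \<pi> h (fst xa)"
  by (cases xa) (simp add: occ_sa_def pmf_sa_dist occ_def mult_left_le pmf_le_1)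

lemma occ_sa_comp_unif:
  fixes \<pi> :: "('x, 'a::finite) policy"
  shows "occ_sa M (comp_pol \<pi> h unif_pol) h xa = occ M \<pi> h (fst xa) / real CARD('a)"
  by (cases xa) (simp add: occ_sa_def pmf_sa_dist occ_comp_pol, simp add: comp_pol_def unif_pol_def)

lemma occ_sa_mix_comp_unif:
  fixes p :: "('x, 'a::finite) policy pmf"
  shows "occ_sa_mix M (map_pmf (\<lambda>\<pi>. comp_pol \<pi> h unif_pol) p) h xa
    = occ_mix M p h (fst xa) / real CARD('a)"
  unfolding occ_sa_mix_def occ_mix_def by (simp add: occ_sa_comp_unif)

lemma occ_mix_nonneg: "0 \<le> occ_mix M p h x"
  unfolding occ_mix_def occ_def by (rule integral_nonneg_AE) auto

lemma Psi_integrand_comp_unif_le_push_obj: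
  fixes M :: "('x::countable, 'a::finite) mdp" and p :: "('x, 'a) policy pmf"
  assumes h: "1 \<le> h" and e: "0 < e"
  shows "measure_pmf.expectation (sa_dist M \<pi> h) (\<lambda>xa. occ_sa M \<pi> h xa /
      (occ_sa_mix M (map_pmf (\<lambda>\<pi>. comp_pol \<pi> h unif_pol) p) h xa + e * occ_sa M \<pi> h xa))
    \<le> real CARD('a) * push_obj M h (occ_mix M p h) e \<pi>"
proof -
  define n where "n = real CARD('a)"
  define D where "D = occ_mix M p h"
  define F where "F xa = occ_sa M \<pi> h xa / (D (fst xa) / n + e * occ_sa M \<pi> h xa)" for xa
  define G where "G x = n * (occ M \<pi> h x / (D x + e * occ M \<pi> h x))" for x
  have n: "1 \<le> n"
    unfolding n_def by (simp add: Suc_le_eq)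
  have D0: "0 \<le> D x" for x
    unfolding D_def by (rule occ_mix_nonneg)
  have occ0: "0 \<le> occ M \<pi> h x" for x
    by (simp add: occ_def)
  have occ_sa0: "0 \<le> occ_sa M \<pi> h xa" for xa
    by (simp add: occ_sa_def)
  have F_le_G: "F xa \<le> G (fst xa)" for xa
    unfolding F_def G_def using occ_sa0 occ_sa_le_occ D0 e n by (rule frac_scaled_le)
  have G_bounds: "0 \<le> G x" "G x \<le> n * (1 / e)" for x
    unfolding G_def using n D0[of x] e occ0[of x]
    by (simp, intro mult_left_mono frac_le_inverse_coeff) auto
  have "measure_pmf.expectation (sa_dist M \<pi> h) (\<lambda>xa. occ_sa M \<pi> h xa /
      (occ_sa_mix M (map_pmf (\<lambda>\<pi>. comp_pol \<pi> h unif_pol) p) h xa + e * occ_sa M \<pi> h xa))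
    \<le> measure_pmf.expectation (sa_dist M \<pi> h) (\<lambda>xa. G (fst xa))"
    unfolding occ_sa_mix_comp_unif D_def[symmetric] n_def[symmetric] F_def[symmetric]
  proof (rule integral_mono[OF _ _ F_le_G])
    show "integrable (sa_dist M \<pi> h) (\<lambda>xa. G (fst xa))"
      by (rule measure_pmf.integrable_const_bound[where B = "n * (1 / e)"]) (use G_bounds in auto)
    have "0 \<le> F xa" for xa
      unfolding F_def using occ_sa0[of xa] D0[of "fst xa"] n e by simp
    then show "integrable (sa_dist M \<pi> h) F"
      using order_trans[OF F_le_G G_bounds(2)]
      by (intro measure_pmf.integrable_const_bound[where B = "n * (1 / e)"]) auto
  qed
  also have "\<dots> = n * measure_pmf.expectation (state_dist M \<pi> h) (\<lambda>x. occ M \<pi> h x / (D x + e * occ M \<pi> h x))"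
    unfolding map_fst_sa_dist[symmetric] G_def by (simp only: integral_map_pmf integral_mult_right_zero)
  also have "\<dots> \<le> n * push_obj M h D e \<pi>"
    using n by (intro mult_left_mono expectation_occ_frac_le_push_obj h D0 e) auto
  finally show ?thesis
    unfolding n_def D_def .
qed

lemma Psi_comp_unif_le:
  fixes M :: "('x::countable, 'a::finite) mdp"
  assumes h: "1 \<le> h" and e: "0 < e" and PI: "PI \<noteq> {}"
  shows "Psi M PI h e (map_pmf (\<lambda>\<pi>. comp_pol \<pi> h unif_pol) p) \<le> real CARD('a) * Psi_push M PI h e p"
  unfolding Psi_def
proof (rule cSUP_least[OF PI])
  fix \<pi> assume "\<pi> \<in> PI"
  have "bdd_above ((\<lambda>\<pi>. push_obj M h (occ_mix M p h) e \<pi>) ` PI)"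
    by (rule bdd_aboveI2) (rule push_obj_bounds(2)[where D = "occ_mix M p h", OF occ_mix_nonneg e])
  then have "push_obj M h (occ_mix M p h) e \<pi> \<le> Psi_push M PI h e p"
    unfolding Psi_push_def using \<open>\<pi> \<in> PI\<close> by (rule cSUP_upper2) simp
  then have "real CARD('a) * push_obj M h (occ_mix M p h) e \<pi> \<le> real CARD('a) * Psi_push M PI h e p"
    by (rule mult_left_mono) simp
  with Psi_integrand_comp_unif_le_push_obj[OF h e]
  show "measure_pmf.expectation (sa_dist M \<pi> h) (\<lambda>xa. occ_sa M \<pi> h xa /
      (occ_sa_mix M (map_pmf (\<lambda>\<pi>. comp_pol \<pi> h unif_pol) p) h xa + e * occ_sa M \<pi> h xa))
    \<le> real CARD('a) * Psi_push M PI h e p"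
    by (rule order_trans)
qed

section \<open>Push coverability and the greedy procedure\<close>

definition push_coverability :: "('x, 'a) mdp \<Rightarrow> nat \<Rightarrow> 'x pmf \<Rightarrow> ennreal" where
  "push_coverability M h \<mu> = (SUP (x, a, x'). ennreal (pmf (Pprev M h x a) x') / ennreal (pmf \<mu> x'))"

lemma C_push_eq_INF_push_coverability: "C_push M h = (INF \<mu>. push_coverability M h \<mu>)"
  unfolding C_push_def push_coverability_def ..

lemma Pprev_le_push_coverability:
  assumes cov: "push_coverability M h \<mu> = ennreal C" and C: "0 \<le> C"
  shows "pmf (Pprev M h x a) x' \<le> C * pmf \<mu> x'"
proof -
  have le: "ennreal (pmf (Pprev M h x a) x') / ennreal (pmf \<mu> x') \<le> ennreal C"
    unfolding cov[symmetric] push_coverability_def by (rule SUP_upper2[where i = "(x, a, x')"]) simp_all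
  show ?thesis
  proof (cases "pmf \<mu> x' = 0")
    case True
    then show ?thesis
      using le by (cases "pmf (Pprev M h x a) x' = 0") (simp_all add: top_unique)
  next
    case False
    then have "0 < pmf \<mu> x'"
      by (simp add: order_less_le)
    with le C show ?thesis
      by (simp add: divide_ennreal pos_divide_le_eq)
  qed
qed

locale greedy_push_exploration =
  fixes M :: "('x::countable, 'a) mdp" and PI :: "('x, 'a) policy set"
    and h T :: nat and pol :: "nat \<Rightarrow> ('x, 'a) policy" and \<epsilon>_opt :: real
  assumes layer: "1 \<le> h" and rounds: "1 \<le> T"
    and pol_in: "\<And>t. t \<in> {1..T} \<Longrightarrow> pol t \<in> PI"
    and approx_opt: "\<And>t. t \<in> {1..T} \<Longrightarrow>
       push_obj M h (\<lambda>x. \<Sum>i\<in>{1..<t}. occ M (pol i) h x) 1 (pol t)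
         \<ge> (SUP \<pi>\<in>PI. push_obj M h (\<lambda>x. \<Sum>i\<in>{1..<t}. occ M (pol i) h x) 1 \<pi>) - \<epsilon>_opt"
begin

definition cover :: "nat \<Rightarrow> 'x \<Rightarrow> real" where
  "cover t x = (\<Sum>i\<in>{1..<t}. occ M (pol i) h x)"

definition mixture :: "('x, 'a) policy pmf" where
  "mixture = pmf_of_multiset (image_mset pol (mset_set {1..T}))"

lemma cover_nonneg: "0 \<le> cover t x"
  unfolding cover_def occ_def by (simp add: sum_nonneg)

lemma cover_mono: "t \<le> t' \<Longrightarrow> cover t x \<le> cover t' x"
  unfolding cover_def occ_def by (intro sum_mono2) auto

lemma mixture_eq_map_pmf: "mixture = map_pmf pol (pmf_of_set {1..T})"
  unfolding mixture_def using rounds by (simp add: map_pmf_of_set)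

lemma set_pmf_mixture: "set_pmf mixture = pol ` {1..T}"
  unfolding mixture_eq_map_pmf using rounds by simp

lemma set_pmf_mixture_subset: "set_pmf mixture \<subseteq> PI"
  unfolding set_pmf_mixture using pol_in by auto

lemma card_set_pmf_mixture_le: "card (set_pmf mixture) \<le> T"
  unfolding set_pmf_mixture using card_image_le[of "{1..T}" pol] by simp

lemma policy_class_nonempty: "PI \<noteq> {}"
  using pol_in[of 1] rounds by auto

lemma occ_mix_mixture: "occ_mix M mixture h x = cover (Suc T) x / real T"
  unfolding occ_mix_def mixture_eq_map_pmf cover_def using rounds
  by (simp add: integral_pmf_of_set atLeastLessThanSuc_atLeastAtMost)

lemma Psi_push_mixture_le_sum:
  "Psi_push M PI h (1 / real T) mixture
    \<le> (\<Sum>t\<in>{1..T}. push_obj M h (cover t) 1 (pol t)) + real T * \<epsilon>_opt"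
  unfolding Psi_push_def
proof (rule cSUP_least[OF policy_class_nonempty])
  fix \<pi> assume "\<pi> \<in> PI"
  have "push_obj M h (occ_mix M mixture h) (1 / real T) \<pi> = real T * push_obj M h (cover (Suc T)) 1 \<pi>"
    unfolding occ_mix_mixture using rounds by (intro push_obj_rescale) simp
  also have "\<dots> = (\<Sum>t\<in>{1..T}. push_obj M h (cover (Suc T)) 1 \<pi>)"
    by simp
  also have "\<dots> \<le> (\<Sum>t\<in>{1..T}. push_obj M h (cover t) 1 (pol t) + \<epsilon>_opt)"
  proof (rule sum_mono)
    fix t assume t: "t \<in> {1..T}"
    have "push_obj M h (cover (Suc T)) 1 \<pi> \<le> push_obj M h (cover t) 1 \<pi>"
      using t by (intro push_obj_antimono cover_nonneg cover_mono) auto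
    also have "\<dots> \<le> (SUP \<pi>\<in>PI. push_obj M h (cover t) 1 \<pi>)"
      using \<open>\<pi> \<in> PI\<close> push_obj_bounds(2)[where D = "cover t" and e = 1, OF cover_nonneg]
      by (intro cSUP_upper bdd_aboveI2[where M = 1]) auto
    also have "\<dots> \<le> push_obj M h (cover t) 1 (pol t) + \<epsilon>_opt"
      using approx_opt[OF t] unfolding cover_def by simp
    finally show "push_obj M h (cover (Suc T)) 1 \<pi> \<le> push_obj M h (cover t) 1 (pol t) + \<epsilon>_opt" .
  qed
  also have "\<dots> = (\<Sum>t\<in>{1..T}. push_obj M h (cover t) 1 (pol t)) + real T * \<epsilon>_opt"
    by (simp add: sum.distrib)
  finally show "push_obj M h (occ_mix M mixture h) (1 / real T) \<pi>
    \<le> (\<Sum>t\<in>{1..T}. push_obj M h (cover t) 1 (pol t)) + real T * \<epsilon>_opt" .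
qed

lemma Psi_push_mixture_le_dominated:
  assumes C: "0 \<le> C" and dom: "\<And>x a x'. pmf (Pprev M h x a) x' \<le> C * pmf \<mu> x'"
    and opt: "real T * \<epsilon>_opt \<le> C * ln (2 * real T)"
  shows "Psi_push M PI h (1 / real T) mixture \<le> 5 * C * ln (2 * real T)"
proof -
  define L where "L = ln (2 * real T)"
  have "1 \<le> C"
    using C dom[of undefined undefined] by (rule pmf_dominated_const_ge_1)
  have ln_le: "ln (1 + real T) \<le> L"
    unfolding L_def using rounds by simp
  have "real T / (1 + real T) \<le> L"
    using ln_add1_ge[of "real T"] ln_le by (simp add: add.commute)
  moreover have "L \<le> C * L"
    using mult_right_mono[OF \<open>1 \<le> C\<close>, of L] rounds by (simp add: L_def)
  ultimately have "2 * real T / (1 + real T) \<le> 2 * C * L"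
    by simp
  moreover have "2 * C * ln (1 + real T) \<le> 2 * C * L"
    using C ln_le by (intro mult_left_mono) auto
  moreover have "(\<Sum>t\<in>{1..T}. push_obj M h (cover t) 1 (pol t))
      \<le> 2 * C * ln (1 + real T) + 2 * real T / (1 + real T)"
    unfolding cover_def[abs_def] using layer C dom by (rule sum_push_obj_le)
  \<comment> \<open>Two copies of \<open>C L\<close> come from the potential bound, two from \<open>2T/(1+T) \<le> 2 C L\<close>,
    one from the optimisation error.\<close>
  ultimately show ?thesis
    using Psi_push_mixture_le_sum opt unfolding L_def by linarith
qed

lemma Psi_push_mixture_le_push_coverability:
  assumes opt: "ennreal \<epsilon>_opt \<le> C_push M h * ennreal (ln (2 * real T) / real T)"
  shows "ennreal (Psi_push M PI h (1 / real T) mixture)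
    \<le> push_coverability M h \<mu> * ennreal (5 * ln (2 * real T))"
proof (cases "push_coverability M h \<mu>")
  case (real C)
  have L: "0 \<le> ln (2 * real T) / real T" "0 \<le> C * ln (2 * real T) / real T"
    using rounds real by simp_all
  have "ennreal \<epsilon>_opt \<le> push_coverability M h \<mu> * ennreal (ln (2 * real T) / real T)"
    using opt unfolding C_push_eq_INF_push_coverability
    by (meson INF_lower UNIV_I mult_right_mono order_trans zero_le)
  then have "\<epsilon>_opt \<le> C * (ln (2 * real T) / real T)"
    using real L by (simp add: ennreal_mult[symmetric])
  then have "real T * \<epsilon>_opt \<le> C * ln (2 * real T)"
    using rounds by (simp add: field_simps)
  then have "Psi_push M PI h (1 / real T) mixture \<le> C * (5 * ln (2 * real T))"
    using Psi_push_mixture_le_dominated[OF real(1) Pprev_le_push_coverability[OF real(2,1)]]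
    by (simp add: mult_ac)
  then show ?thesis
    using real rounds by (simp add: ennreal_mult[symmetric])
qed (use rounds in \<open>simp add: ennreal_top_mult\<close>)

lemma Psi_push_mixture_le_C_push:
  assumes "ennreal \<epsilon>_opt \<le> C_push M h * ennreal (ln (2 * real T) / real T)"
  shows "ennreal (Psi_push M PI h (1 / real T) mixture) \<le> 5 * C_push M h * ennreal (ln (2 * real T))"
proof -
  have "ennreal (Psi_push M PI h (1 / real T) mixture) \<le> C_push M h * ennreal (5 * ln (2 * real T))"
    unfolding C_push_eq_INF_push_coverability using rounds
    by (intro ennreal_le_INF_mult Psi_push_mixture_le_push_coverability assms) auto
  then show ?thesis
    using rounds by (simp add: ennreal_mult mult_ac)
qed

end

theorem theorem4p5:
  fixes M :: "('x::countable, 'a::finite) mdp"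
    and PI :: "('x, 'a) policy set"
    and \<epsilon> \<epsilon>_opt :: real and h T :: nat
    and pol :: "nat \<Rightarrow> ('x, 'a) policy"
  assumes eps: "0 < \<epsilon>" "\<epsilon> \<le> 1"
    and T_def: "real T = 1 / \<epsilon>"
    and h: "1 \<le> h" "h \<le> horizon M"
    and pol_in: "\<And>t. t \<in> {1..T} \<Longrightarrow> pol t \<in> PI"
    and approx_opt: "\<And>t. t \<in> {1..T} \<Longrightarrow>
       push_obj M h (\<lambda>x. \<Sum>i\<in>{1..<t}. occ M (pol i) h x) 1 (pol t)
         \<ge> (SUP \<pi>\<in>PI. push_obj M h (\<lambda>x. \<Sum>i\<in>{1..<t}. occ M (pol i) h x) 1 \<pi>) - \<epsilon>_opt"
    and eps_opt: "ennreal \<epsilon>_opt \<le> C_push M h * ennreal (\<epsilon> * ln (2 / \<epsilon>))"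
  shows "(let p = pmf_of_multiset (image_mset pol (mset_set {1..T}));
              p' = map_pmf (\<lambda>\<pi>. comp_pol \<pi> h unif_pol) p
          in set_pmf p \<subseteq> PI
           \<and> real (card (set_pmf p)) \<le> 1 / \<epsilon>
           \<and> ennreal (Psi_push M PI h \<epsilon> p) \<le> 5 * C_push M h * ennreal (ln (2 / \<epsilon>))
           \<and> ennreal (Psi M PI h \<epsilon> p')
               \<le> 5 * of_nat CARD('a) * C_push M h * ennreal (ln (2 / \<epsilon>)))"
proof -
  have "1 \<le> real T"
    unfolding T_def using eps by simp
  then have "1 \<le> T"
    by simp
  have eps_T: "\<epsilon> = 1 / real T"
    unfolding T_def by simp
  interpret greedy_push_exploration M PI h T pol \<epsilon>_opt
    using h pol_in approx_opt \<open>1 \<le> T\<close> by unfold_locales auto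
  have ln_eq: "ln (2 / \<epsilon>) = ln (2 * real T)"
    using eps_T by simp
  have "ennreal \<epsilon>_opt \<le> C_push M h * ennreal (ln (2 * real T) / real T)"
    using eps_opt unfolding ln_eq by (simp add: eps_T)
  then have push: "ennreal (Psi_push M PI h \<epsilon> mixture) \<le> 5 * C_push M h * ennreal (ln (2 / \<epsilon>))"
    unfolding ln_eq unfolding eps_T by (rule Psi_push_mixture_le_C_push)
  have "ennreal (Psi M PI h \<epsilon> (map_pmf (\<lambda>\<pi>. comp_pol \<pi> h unif_pol) mixture))
      \<le> of_nat CARD('a) * ennreal (Psi_push M PI h \<epsilon> mixture)"
    using Psi_comp_unif_le[OF layer eps(1) policy_class_nonempty]
    by (simp add: ennreal_of_nat_eq_real_of_nat ennreal_mult'[symmetric] ennreal_leI)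
  also have "\<dots> \<le> of_nat CARD('a) * (5 * C_push M h * ennreal (ln (2 / \<epsilon>)))"
    using push by (rule mult_left_mono) simp
  finally show ?thesis
    unfolding Let_def mixture_def[symmetric]
    using set_pmf_mixture_subset card_set_pmf_mixture_le push
    by (simp add: T_def[symmetric] mult_ac)
qed

end
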